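(* Let $t,\alpha,\lambda>0$ and $n$ be given. For a differentiable function $R(t)$ define $$r(t)=\frac{tR'(t)+\lambda-R(t)\big(t+2n+\alpha+\lambda-tR(t)\big)}{2},\quad \beta^*(t)=\frac{1}{1-R(t)}\left(n(\alpha+n)+\frac{r(t)^2-\lambda r(t)}{R(t)}+(\alpha+\lambda+2n)r(t)\right),$$ $$\Sigma(t)=\frac{n(\alpha+\lambda+n)-t\,r(t)-\beta^*(t)}{t},$$ and consider the equation $$P''(z)+\left(\frac{\alpha+1}{z}+\frac{\lambda+1}{z+t}-1-\frac{1}{z+t[1-R(t)]}\right)P'(z)+\left(\frac{t(r(t)+nR(t))}{z(z+t)(z+t(1-R(t)))}+\frac{n-\Sigma(t)}{z}+\frac{\Sigma(t)}{z+t}\right)P(z)=0.\quad(\ast)$$ If $R$ satisfies the Riccati equation $tR'(t)=tR(t)^2-(\alpha+\lambda+t)R(t)+\lambda$, with solution $$R(t)=\frac{\alpha C_2U(\alpha+1,\alpha+\lambda+1,t)+L_{-\alpha-1}^{\alpha+\lambda}(t)}{C_2U(\alpha,\alpha+\lambda,t)+L_{-\alpha}^{\alpha+\lambda-1}(t)}+1$$ for a constant $C_2$, then for a solution $P$ of $(\ast)$ the function $\widetilde P(u):=P(-tu)$ satisfies $$\widetilde P''(u)+\left(\frac{\tilde\gamma+1}{u}+\frac{\tilde\delta+1}{u-1}+\tilde\epsilon-\frac{\tilde\alpha}{\tilde\alpha u-\tilde q}\right)\widetilde P'(u)+\frac{(\tilde\alpha+\tilde\epsilon)(\tilde\alpha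 u^2-2\tilde qu)+\tilde\alpha\tilde\gamma+\tilde q^2-\tilde q(\tilde\gamma+\tilde\delta-\tilde\epsilon)}{u(u-1)(\tilde\alpha u-\tilde q)}\widetilde P(u)=0$$ (the equation satisfied by the derivative of a confluent Heun function) with $\tilde\gamma=\alpha$, $\tilde\delta=\lambda$, $\tilde\epsilon=t$, $\tilde q=-(n+1)t(1-R(t))$, $\tilde\alpha=-(n+1)t$.
   Context: $U(a,b,x)$ is the Kummer confluent hypergeometric function of the second kind and $L_\nu^{a}(x)$ is the generalized Laguerre function. Equation $(\ast)$ is the second-order ODE satisfied by the monic polynomials orthogonal with respect to $x^\alpha(x+t)^\lambda e^{-x}$ on $[0,\infty)$ when $R$ is the auxiliary quantity $R_n(t)=\frac{\lambda}{h_n}\int_0^\infty\frac{P_n^2(x)}{x+t}x^\alpha(x+t)^\lambda e^{-x}dx$; here it is regarded as an equation determined by an arbitrary function $R$. *)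

theory Defs
  imports "HOL-Complex_Analysis.Complex_Analysis"
begin

definition r_aux :: "real \<Rightarrow> real \<Rightarrow> real \<Rightarrow> nat \<Rightarrow> (real \<Rightarrow> real) \<Rightarrow> real" where
  "r_aux t \<alpha> lam n R =
     (t * deriv R t + lam - R t * (t + 2 * real n + \<alpha> + lam - t * R t)) / 2"

definition beta_star :: "real \<Rightarrow> real \<Rightarrow> real \<Rightarrow> nat \<Rightarrow> (real \<Rightarrow> real) \<Rightarrow> real" where
  "beta_star t \<alpha> lam n R =
     (let r = r_aux t \<alpha> lam n R in
      (1 / (1 - R t)) * (real n * (\<alpha> + real n) + (r\<^sup>2 - lam * r) / R t
                         + (\<alpha> + lam + 2 * real n) * r))"

definition Sigma_aux :: "real \<Rightarrow> real \<Rightarrow> real \<Rightarrow> nat \<Rightarrow> (real \<Rightarrow> real) \<Rightarrow> real" where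
  "Sigma_aux t \<alpha> lam n R =
     (real n * (\<alpha> + lam + real n) - t * r_aux t \<alpha> lam n R - beta_star t \<alpha> lam n R) / t"

end

theory Submission
  imports Defs
begin

text \<open>
  Only the Riccati equation at the single point t enters: it eliminates R'(t) from r(t), after
  which \<Sigma>(t) = n R(t) and r(t) + n R(t) are polynomials in R(t). The substitution z = -t u multiplies P' by -t
  and P'' by t^2, and the coefficients of the rescaled equation agree with those of the
  confluent Heun derivative equation by two partial-fraction identities in u.
\<close>

lemma deriv_compose_scale:
  fixes f :: "complex \<Rightarrow> complex"
  assumes "open S" "f holomorphic_on S" "c * u \<in> S"
  shows "deriv (\<lambda>v. f (c * v)) u = c * deriv f (c * u)"
proof -
  have "f field_differentiable at (c * u)"
    using assms holomorphic_on_imp_differentiable_at by blast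
  then show ?thesis
    using deriv_chain[of "\<lambda>v. c * v" u f] by (simp add: o_def field_differentiable_linear)
qed

lemma second_deriv_compose_scale:
  fixes f :: "complex \<Rightarrow> complex"
  assumes S: "open S" and f: "f holomorphic_on S" and u: "c * u \<in> S"
  shows "deriv (deriv (\<lambda>v. f (c * v))) u = c\<^sup>2 * deriv (deriv f) (c * u)"
proof -
  have "open ((\<lambda>v. c * v) -` S)"
    using S by (intro continuous_open_vimage continuous_intros)
  then have "eventually (\<lambda>v. c * v \<in> S) (nhds u)"
    using u eventually_nhds_in_open by fastforce
  then have "eventually (\<lambda>v. deriv (\<lambda>v. f (c * v)) v = c * deriv f (c * v)) (nhds u)"
    by eventually_elim (use S f deriv_compose_scale in blast)
  then have "deriv (deriv (\<lambda>v. f (c * v))) u = deriv (\<lambda>v. c * deriv f (c * v)) u"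
    by (rule deriv_cong_ev) simp
  also have "\<dots> = c * deriv (\<lambda>v. deriv f (c * v)) u"
  proof (rule deriv_cmult)
    have "deriv f holomorphic_on S" using f S by (rule holomorphic_deriv)
    then show "(\<lambda>v. deriv f (c * v)) field_differentiable at u"
      using S u by (auto intro!: field_differentiable_compose[where f = "\<lambda>v. c * v", unfolded o_def]
          field_differentiable_linear holomorphic_on_imp_differentiable_at)
  qed
  also have "\<dots> = c\<^sup>2 * deriv (deriv f) (c * u)"
    using deriv_compose_scale[OF S holomorphic_deriv[OF f S] u] by (simp add: power2_eq_square)
  finally show ?thesis .
qed

lemma second_order_ode_rescale:
  fixes P :: "complex \<Rightarrow> complex" and A B c u :: complex
  assumes "open S" "P holomorphic_on S" "c * u \<in> S"
    and "deriv (deriv P) (c * u) + A * deriv P (c * u) + B * P (c * u) = 0"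
  shows "deriv (deriv (\<lambda>v. P (c * v))) u + (c * A) * deriv (\<lambda>v. P (c * v)) u
         + (c\<^sup>2 * B) * P (c * u) = 0"
proof -
  have "deriv (deriv (\<lambda>v. P (c * v))) u + (c * A) * deriv (\<lambda>v. P (c * v)) u + (c\<^sup>2 * B) * P (c * u)
      = c\<^sup>2 * (deriv (deriv P) (c * u) + A * deriv P (c * u) + B * P (c * u))"
    unfolding deriv_compose_scale[OF assms(1-3)] second_deriv_compose_scale[OF assms(1-3)]
    by (simp add: algebra_simps power2_eq_square)
  then show ?thesis using assms(4) by simp
qed

lemma r_aux_Riccati:
  assumes "t * deriv R t = t * (R t)\<^sup>2 - (\<alpha> + lam + t) * R t + lam"
  shows "r_aux t \<alpha> lam n R = t * (R t)\<^sup>2 - (\<alpha> + lam + t + real n) * R t + lam"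
  unfolding r_aux_def assms by (simp add: field_simps power2_eq_square)

lemma beta_star_Riccati:
  assumes "t * deriv R t = t * (R t)\<^sup>2 - (\<alpha> + lam + t) * R t + lam"
    and "R t \<noteq> 0" and "R t \<noteq> 1"
  shows "beta_star t \<alpha> lam n R = real n * (\<alpha> + lam + real n) - t * (r_aux t \<alpha> lam n R + real n * R t)"
proof -
  define r where "r = r_aux t \<alpha> lam n R"
  have r: "r = t * (R t)\<^sup>2 - (\<alpha> + lam + t + real n) * R t + lam"
    unfolding r_def using assms(1) by (rule r_aux_Riccati)
  have "r - lam = R t * (t * R t - (\<alpha> + lam + t + real n))"
    unfolding r by (simp add: algebra_simps power2_eq_square)
  then have "r\<^sup>2 - lam * r = R t * (r * (t * R t - (\<alpha> + lam + t + real n)))"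
    by (metis mult.left_commute power2_eq_square right_diff_distrib mult.commute)
  then have "(r\<^sup>2 - lam * r) / R t = r * (t * R t - (\<alpha> + lam + t + real n))"
    using assms(2) by simp
  moreover have "real n * (\<alpha> + real n) + r * (t * R t - (\<alpha> + lam + t + real n)) + (\<alpha> + lam + 2 * real n) * r
      = (1 - R t) * (real n * (\<alpha> + lam + real n) - t * (r + real n * R t))"
    unfolding r by (simp add: algebra_simps power2_eq_square)
  ultimately show ?thesis
    using assms(3) unfolding beta_star_def Let_def r_def[symmetric] by simp
qed

lemma Sigma_aux_Riccati:
  assumes "t \<noteq> 0" and "t * deriv R t = t * (R t)\<^sup>2 - (\<alpha> + lam + t) * R t + lam"
    and "R t \<noteq> 0" and "R t \<noteq> 1"
  shows "Sigma_aux t \<alpha> lam n R = real n * R t"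
  using assms(1) unfolding Sigma_aux_def beta_star_Riccati[OF assms(2-4)] by (simp add: field_simps)

lemma heun_first_coefficient_rescaled:
  fixes u z T a c g d :: complex
  assumes z: "z = - T * u" and "T \<noteq> 0" "a \<noteq> 0" "u \<noteq> 0" "u \<noteq> 1" "u \<noteq> c"
  shows "(g + 1) / u + (d + 1) / (u - 1) + T - a / (a * u - a * c)
       = - T * ((g + 1) / z + (d + 1) / (z + T) - 1 - 1 / (z + T * c))"
proof -
  have nz: "u - 1 \<noteq> 0" "u - c \<noteq> 0" using assms by auto
  have shift: "z + T = - T * (u - 1)" "z + T * c = - T * (u - c)" "a * u - a * c = a * (u - c)"
    by (simp_all add: z algebra_simps)
  have "(g + 1) / u = - T * ((g + 1) / z)" using assms by (simp add: z)
  moreover have "(d + 1) / (u - 1) = - T * ((d + 1) / (z + T))"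
    unfolding shift using assms nz by simp
  moreover have "a / (a * u - a * c) = - T * (1 / (z + T * c))"
    unfolding shift using assms nz by simp
  ultimately show ?thesis by (simp add: algebra_simps)
qed

lemma heun_second_coefficient_rescaled:
  fixes u z T c g d m :: complex
  assumes z: "z = - T * u" and c: "c = 1 - \<rho>" and a: "a = - (m + 1) * T"
    and T: "T \<noteq> 0" and "m + 1 \<noteq> 0" and u: "u \<noteq> 0" and "u \<noteq> 1" "u \<noteq> c"
  shows "((a + T) * (a * u\<^sup>2 - 2 * (a * c) * u) + a * g + (a * c)\<^sup>2 - (a * c) * (g + d - T))
           / (u * (u - 1) * (a * u - a * c))
       = (- T)\<^sup>2 * (T * ((T * \<rho>\<^sup>2 - (g + d + T + m) * \<rho> + d) + m * \<rho>) / (z * (z + T) * (z + T * c))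
                   + (m - m * \<rho>) / z + m * \<rho> / (z + T))"
    (is "?N / _ = (- T)\<^sup>2 * (T * ?X / _ + _ + _)")
proof -
  define X where "X = ?X"
  define D where "D = u * (u - 1) * (u - c)"
  have nz: "a \<noteq> 0" "u - 1 \<noteq> 0" "u - c \<noteq> 0"
    using assms unfolding a by (auto simp: add_eq_0_iff)
  then have D: "D \<noteq> 0" using u by (simp add: D_def)
  have shift: "z + T = - T * (u - 1)" "z + T * c = - T * (u - c)" "a * u - a * c = a * (u - c)"
    by (simp_all add: z algebra_simps)
  have "z * (z + T) * (z + T * c) = - (T\<^sup>2 * T) * D"
    unfolding shift by (simp add: z D_def algebra_simps power2_eq_square)
  then have "(- T)\<^sup>2 * (T * X / (z * (z + T) * (z + T * c))) = - X / D"
    using T by simp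
  moreover have "(- T)\<^sup>2 * ((m - m * \<rho>) / z) = - T * (m - m * \<rho>) * (u - 1) * (u - c) / D"
    using T u nz D by (simp add: z D_def field_simps power2_eq_square)
  moreover have "(- T)\<^sup>2 * (m * \<rho> / (z + T)) = - T * (m * \<rho>) * u * (u - c) / D"
    unfolding shift using T u nz D by (simp add: D_def field_simps power2_eq_square)
  moreover have "?N / (u * (u - 1) * (a * u - a * c))
      = (- X - T * (m - m * \<rho>) * (u - 1) * (u - c) - T * (m * \<rho>) * u * (u - c)) / D"
  proof -
    have "?N = a * (- X - T * (m - m * \<rho>) * (u - 1) * (u - c) - T * (m * \<rho>) * u * (u - c))"
      unfolding X_def a c by (simp add: algebra_simps power2_eq_square)
    moreover have "u * (u - 1) * (a * u - a * c) = a * D"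
      unfolding shift D_def by simp
    ultimately show ?thesis using nz by simp
  qed
  ultimately show ?thesis
    unfolding X_def[symmetric] by (simp add: distrib_left add_divide_distrib diff_divide_distrib)
qed

lemma confluent_Heun_derivative_equation_rescaled:
  fixes P :: "complex \<Rightarrow> complex" and T \<rho> a c m g d u :: complex
  assumes S: "open S" and P: "P holomorphic_on S"
    and T: "T \<noteq> 0" and m: "m + 1 \<noteq> 0" and a: "a = - (m + 1) * T" and c: "c = 1 - \<rho>"
    and ode: "\<forall>z\<in>S. z \<noteq> 0 \<and> z \<noteq> - T \<and> z \<noteq> - (T * c) \<longrightarrow>
       deriv (deriv P) z + ((g + 1) / z + (d + 1) / (z + T) - 1 - 1 / (z + T * c)) * deriv P z
       + (T * ((T * \<rho>\<^sup>2 - (g + d + T + m) * \<rho> + d) + m * \<rho>) / (z * (z + T) * (z + T * c))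
          + (m - m * \<rho>) / z + m * \<rho> / (z + T)) * P z = 0"
    and u: "- (T * u) \<in> S" "u \<noteq> 0" "u \<noteq> 1" "u \<noteq> c"
  shows "deriv (deriv (\<lambda>v. P (- (T * v)))) u
       + ((g + 1) / u + (d + 1) / (u - 1) + T - a / (a * u - a * c)) * deriv (\<lambda>v. P (- (T * v))) u
       + ((a + T) * (a * u\<^sup>2 - 2 * (a * c) * u) + a * g + (a * c)\<^sup>2 - (a * c) * (g + d - T))
           / (u * (u - 1) * (a * u - a * c)) * P (- (T * u)) = 0"
proof -
  define z where "z = - T * u"
  have a0: "a \<noteq> 0" using T m unfolding a by (auto simp: add_eq_0_iff)
  have zS: "- T * u \<in> S" using u by simp
  have "z \<in> S" "z \<noteq> 0" "z \<noteq> - T" "z \<noteq> - (T * c)"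
    using u T by (auto simp: z_def)
  then have "deriv (deriv P) (- T * u)
      + ((g + 1) / z + (d + 1) / (z + T) - 1 - 1 / (z + T * c)) * deriv P (- T * u)
      + (T * ((T * \<rho>\<^sup>2 - (g + d + T + m) * \<rho> + d) + m * \<rho>) / (z * (z + T) * (z + T * c))
          + (m - m * \<rho>) / z + m * \<rho> / (z + T)) * P (- T * u) = 0"
    using ode unfolding z_def by blast
  from second_order_ode_rescale[OF S P zS this] show ?thesis
    unfolding heun_first_coefficient_rescaled[OF z_def T a0 u(2-4), symmetric]
      heun_second_coefficient_rescaled[OF z_def c a T m u(2-4), symmetric]
    by (simp only: minus_mult_left)
qed

theorem mainTheorem13:
  fixes t \<alpha> lam :: real and n :: nat and R :: "real \<Rightarrow> real"
    and P :: "complex \<Rightarrow> complex" and S :: "complex set"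
  assumes ht: "t > 0" and ha: "\<alpha> > 0" and hl: "lam > 0"
    and hRdiff: "\<forall>s>0. R differentiable (at s)"
    and hRicc: "\<forall>s>0. s * deriv R s = s * (R s)\<^sup>2 - (\<alpha> + lam + s) * R s + lam"
    and hR0: "R t \<noteq> 0" and hR1: "R t \<noteq> 1"
    and hS: "open S" and hP: "P holomorphic_on S"
    and hODE: "\<forall>z\<in>S. z \<noteq> 0 \<and> z \<noteq> - of_real t \<and> z \<noteq> - of_real (t * (1 - R t)) \<longrightarrow>
       deriv (deriv P) z
       + ((of_real \<alpha> + 1) / z + (of_real lam + 1) / (z + of_real t) - 1
          - 1 / (z + of_real (t * (1 - R t)))) * deriv P z
       + (of_real (t * (r_aux t \<alpha> lam n R + real n * R t))
            / (z * (z + of_real t) * (z + of_real (t * (1 - R t))))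
          + (of_nat n - of_real (Sigma_aux t \<alpha> lam n R)) / z
          + of_real (Sigma_aux t \<alpha> lam n R) / (z + of_real t)) * P z = 0"
  shows "\<forall>u::complex. - (of_real t * u) \<in> S \<and> u \<noteq> 0 \<and> u \<noteq> 1 \<and> u \<noteq> of_real (1 - R t) \<longrightarrow>
     (let Pt = (\<lambda>v. P (- (of_real t * v)));
          g = of_real \<alpha>; d = of_real lam; e = of_real t;
          q = - (of_nat n + 1) * of_real t * of_real (1 - R t);
          a = - (of_nat n + 1) * of_real t
      in deriv (deriv Pt) u
         + ((g + 1) / u + (d + 1) / (u - 1) + e - a / (a * u - q)) * deriv Pt u
         + ((a + e) * (a * u\<^sup>2 - 2 * q * u) + a * g + q\<^sup>2 - q * (g + d - e))
             / (u * (u - 1) * (a * u - q)) * Pt u = 0)"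
proof -
  have Ricc: "t * deriv R t = t * (R t)\<^sup>2 - (\<alpha> + lam + t) * R t + lam"
    using hRicc ht by blast
  have Sigma: "Sigma_aux t \<alpha> lam n R = real n * R t"
    using ht Ricc hR0 hR1 by (simp add: Sigma_aux_Riccati)
  have ode: "\<forall>z\<in>S. z \<noteq> 0 \<and> z \<noteq> - of_real t \<and> z \<noteq> - (of_real t * of_real (1 - R t)) \<longrightarrow>
       deriv (deriv P) z
       + ((of_real \<alpha> + 1) / z + (of_real lam + 1) / (z + of_real t) - 1
          - 1 / (z + of_real t * of_real (1 - R t))) * deriv P z
       + (of_real t * ((of_real t * (of_real (R t))\<^sup>2
              - (of_real \<alpha> + of_real lam + of_real t + of_nat n) * of_real (R t) + of_real lam)
            + of_nat n * of_real (R t))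
            / (z * (z + of_real t) * (z + of_real t * of_real (1 - R t)))
          + (of_nat n - of_nat n * of_real (R t)) / z
          + of_nat n * of_real (R t) / (z + of_real t)) * P z = 0"
    using hODE unfolding Sigma r_aux_Riccati[OF Ricc] by simp
  have "complex_of_nat n + 1 \<noteq> 0"
    by (metis of_nat_Suc of_nat_neq_0 add.commute)
  then show ?thesis
    unfolding Let_def
    by (intro allI impI confluent_Heun_derivative_equation_rescaled[OF hS hP _ _ refl _ ode])
      (use ht in auto)
qed

end
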